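(* Let $G$ be a finite primitive permutation group on $\Omega$ of diagonal type, and let $p$ be a prime dividing $|\Omega|$. Then $G$ has a subdegree divisible by $p$.
   Context: $G$ is of diagonal type if its socle is $N=T^k$ for a nonabelian simple group $T$ and $k\ge 2$, and the stabiliser $N_\alpha$ of a point $\alpha\in\Omega$ is a full diagonal subgroup of $N$, i.e. of the form $\{(t^{\varphi_1},\dots,t^{\varphi_k}) : t\in T\}$ for some automorphisms $\varphi_i$ of $T$; then $|\Omega|=|T|^{k-1}$. A subdegree is the size of an orbit of a point stabiliser. *)

theory Defs
  imports "HOL-Algebra.Algebra"
begin

definition PG :: "'a set \<Rightarrow> ('a \<Rightarrow> 'a) set \<Rightarrow> ('a \<Rightarrow> 'a) monoid" where
  "PG \<Omega> G = (BijGroup \<Omega>)\<lparr>carrier := G\<rparr>"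

definition perm_group :: "'a set \<Rightarrow> ('a \<Rightarrow> 'a) set \<Rightarrow> bool" where
  "perm_group \<Omega> G \<longleftrightarrow> subgroup G (BijGroup \<Omega>)"

definition transitive_on :: "'a set \<Rightarrow> ('a \<Rightarrow> 'a) set \<Rightarrow> bool" where
  "transitive_on \<Omega> G \<longleftrightarrow> \<Omega> \<noteq> {} \<and> (\<forall>\<alpha>\<in>\<Omega>. \<forall>\<beta>\<in>\<Omega>. \<exists>g\<in>G. g \<alpha> = \<beta>)"

definition is_block :: "'a set \<Rightarrow> ('a \<Rightarrow> 'a) set \<Rightarrow> 'a set \<Rightarrow> bool" where
  "is_block \<Omega> G B \<longleftrightarrow> B \<subseteq> \<Omega> \<and> (\<forall>g\<in>G. g ` B = B \<or> g ` B \<inter> B = {})"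

definition primitive :: "'a set \<Rightarrow> ('a \<Rightarrow> 'a) set \<Rightarrow> bool" where
  "primitive \<Omega> G \<longleftrightarrow> perm_group \<Omega> G \<and> transitive_on \<Omega> G \<and>
     (\<forall>B. is_block \<Omega> G B \<and> B \<noteq> {} \<longrightarrow> card B = 1 \<or> B = \<Omega>)"

definition minimal_normal :: "('g, 'c) monoid_scheme \<Rightarrow> 'g set \<Rightarrow> bool" where
  "minimal_normal H N \<longleftrightarrow> N \<lhd> H \<and> N \<noteq> {\<one>\<^bsub>H\<^esub>} \<and>
     (\<forall>M. M \<lhd> H \<longrightarrow> M \<subseteq> N \<longrightarrow> M = {\<one>\<^bsub>H\<^esub>} \<or> M = N)"

definition socle :: "('g, 'c) monoid_scheme \<Rightarrow> 'g set" where
  "socle H = generate H (\<Union>{N. minimal_normal H N})"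

text \<open>G is of diagonal type with respect to the simple group T and k: its socle N is
  isomorphic (via f) to T^k, T nonabelian simple, k \<ge> 2, and for a point \<alpha> the
  stabiliser N_\<alpha> is mapped by f onto a full diagonal subgroup
  {(t^\<phi>_1, ..., t^\<phi>_k) : t \<in> T} with automorphisms \<phi>_i of T.\<close>
definition diagonal_type :: "'a set \<Rightarrow> ('a \<Rightarrow> 'a) set \<Rightarrow> ('b, 'c) monoid_scheme \<Rightarrow> nat \<Rightarrow> bool" where
  "diagonal_type \<Omega> G T k \<longleftrightarrow>
     simple_group T \<and> \<not> comm_group T \<and> 2 \<le> k \<and>
     (\<exists>f. f \<in> iso ((PG \<Omega> G)\<lparr>carrier := socle (PG \<Omega> G)\<rparr>) (product_group {..<k} (\<lambda>_. T)) \<and>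
       (\<exists>\<alpha>\<in>\<Omega>. \<exists>\<phi>. (\<forall>i<k. \<phi> i \<in> iso T T) \<and>
          f ` {g \<in> socle (PG \<Omega> G). g \<alpha> = \<alpha>} = {(\<lambda>i\<in>{..<k}. \<phi> i t) | t. t \<in> carrier T}))"

definition subdegree :: "('a \<Rightarrow> 'a) set \<Rightarrow> 'a \<Rightarrow> 'a \<Rightarrow> nat" where
  "subdegree G \<alpha> \<beta> = card {g \<beta> | g. g \<in> G \<and> g \<alpha> = \<alpha>}"

end

theory Submission
  imports Defs
begin

(*
  The socle N = T^k is normal in the primitive group G and its point stabiliser N_\<alpha>, a diagonal,
  is proper; so N is transitive, |\<Omega>| = |T|^(k-1) and p divides |T|. A finite nonabelian
  simple group has a conjugacy class of size divisible by p, say that of s.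
  Transport the action of N to T^k: the stabiliser of \<alpha> is the diagonal D, and for \<beta> = y \<alpha>
  with y = (s^\<phi>\<^sub>0, 1, ..., 1) the stabiliser of \<beta> in D is D \<inter> D^y, which is the centraliser
  of s. So the N_\<alpha>-orbit of \<beta> has the size of the class of s. Finally N_\<alpha> is normal in G_\<alpha>,
  so the G_\<alpha>-orbit of \<beta> is a union of N_\<alpha>-orbits of equal size.
*)

lemma (in group_action) orbit_subset:
  "x \<in> E \<Longrightarrow> orbit G \<phi> x \<subseteq> E"
  using element_image by (auto simp: orbit_def)

lemma (in group_action) orbit_eq_if_mem:
  assumes x: "x \<in> E" and y: "y \<in> orbit G \<phi> x"
  shows "orbit G \<phi> y = orbit G \<phi> x"
proof
  have yE: "y \<in> E"
    using orbit_subset x y by blast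
  show "orbit G \<phi> y \<subseteq> orbit G \<phi> x"
    using orbit_trans[OF x yE _ y] orbit_subset[OF yE] by blast
  show "orbit G \<phi> x \<subseteq> orbit G \<phi> y"
    using orbit_trans[OF yE x _ orbit_sym[OF x yE y]] orbit_subset[OF x] by blast
qed

lemma (in group_action) action_via_hom:
  assumes "group H" "h \<in> hom H G"
  shows "group_action H E (\<lambda>a. \<phi> (h a))"
proof -
  have "(\<lambda>a. \<phi> (h a)) \<in> hom H (BijGroup E)"
    using hom_compose[OF assms(2) group_hom.homh[OF group_hom]] by (simp add: comp_def)
  then show ?thesis
    unfolding group_action_def group_hom_def group_hom_axioms_def
    using assms(1) group_BijGroup by blast
qed

lemma (in group_action) stabilizer_image_iff:
  assumes x: "x \<in> E" and y: "y \<in> carrier G"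
  shows "g \<in> stabilizer G \<phi> (\<phi> y x) \<longleftrightarrow> g \<in> carrier G \<and> inv y \<otimes> g \<otimes> y \<in> stabilizer G \<phi> x"
proof -
  interpret group G
    using group_hom group_hom.axioms(1) by blast
  have yx: "\<phi> y x \<in> E"
    using element_image x y by blast
  have "\<phi> g (\<phi> y x) = \<phi> y x \<longleftrightarrow> \<phi> (inv y \<otimes> g \<otimes> y) x = x" if g: "g \<in> carrier G"
  proof -
    have gyx: "\<phi> g (\<phi> y x) \<in> E"
      using element_image g yx by blast
    have cancel: "\<phi> (inv y) (\<phi> y x) = x"
      using composition_rule[OF x inv_closed[OF y] y] id_eq_one x y by (metis l_inv restrict_apply')
    have "\<phi> g (\<phi> y x) = \<phi> y x \<longleftrightarrow> \<phi> (inv y) (\<phi> g (\<phi> y x)) = \<phi> (inv y) (\<phi> y x)"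
      using inj_prop[OF inv_closed[OF y]] gyx yx by (auto dest: inj_onD)
    also have "\<phi> (inv y) (\<phi> g (\<phi> y x)) = \<phi> (inv y \<otimes> g \<otimes> y) x"
      using composition_rule x y g yx by simp
    finally show ?thesis
      using cancel by simp
  qed
  then show ?thesis
    unfolding stabilizer_def using y by auto
qed

lemma (in group_action) normal_orbit_image:
  assumes K: "K \<lhd> G" and g: "g \<in> carrier G" and x: "x \<in> E"
  shows "\<phi> g ` orbit (G\<lparr>carrier := K\<rparr>) \<phi> x = orbit (G\<lparr>carrier := K\<rparr>) \<phi> (\<phi> g x)"
proof -
  interpret group G
    using group_hom group_hom.axioms(1) by blast
  have KG: "k \<in> carrier G" if "k \<in> K" for k
    using subgroup.mem_carrier[OF normal_imp_subgroup[OF K] that] .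
  have out: "\<phi> g (\<phi> k x) = \<phi> (g \<otimes> k \<otimes> inv g) (\<phi> g x)" if k: "k \<in> K" for k
  proof -
    have "\<phi> (g \<otimes> k \<otimes> inv g) (\<phi> g x) = \<phi> (g \<otimes> k \<otimes> inv g \<otimes> g) x"
      using composition_rule[OF x _ g] g KG[OF k] by simp
    also have "g \<otimes> k \<otimes> inv g \<otimes> g = g \<otimes> k"
      using g KG[OF k] by (simp add: m_assoc)
    finally show ?thesis
      using composition_rule[OF x g KG[OF k]] by simp
  qed
  have into: "\<phi> k (\<phi> g x) = \<phi> g (\<phi> (inv g \<otimes> k \<otimes> g) x)" if k: "k \<in> K" for k
  proof -
    have "\<phi> g (\<phi> (inv g \<otimes> k \<otimes> g) x) = \<phi> (g \<otimes> (inv g \<otimes> k \<otimes> g)) x"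
      using composition_rule[OF x g] g KG[OF k] by simp
    also have "g \<otimes> (inv g \<otimes> k \<otimes> g) = k \<otimes> g"
      using g KG[OF k] by (simp add: m_assoc[symmetric])
    finally show ?thesis
      using composition_rule[OF x KG[OF k] g] by simp
  qed
  show ?thesis
  proof
    show "\<phi> g ` orbit (G\<lparr>carrier := K\<rparr>) \<phi> x \<subseteq> orbit (G\<lparr>carrier := K\<rparr>) \<phi> (\<phi> g x)"
      using out normal.inv_op_closed2[OF K g] unfolding orbit_def by auto
    show "orbit (G\<lparr>carrier := K\<rparr>) \<phi> (\<phi> g x) \<subseteq> \<phi> g ` orbit (G\<lparr>carrier := K\<rparr>) \<phi> x"
      using into normal.inv_op_closed1[OF K g] unfolding orbit_def by auto
  qed
qed

lemma (in group_action) card_orbit_normal_eq: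
  assumes K: "K \<lhd> G" and x: "x \<in> E" and y: "y \<in> orbit G \<phi> x"
  shows "card (orbit (G\<lparr>carrier := K\<rparr>) \<phi> y) = card (orbit (G\<lparr>carrier := K\<rparr>) \<phi> x)"
proof -
  interpret K: group_action "G\<lparr>carrier := K\<rparr>" E \<phi>
    using induced_action[OF normal_imp_subgroup[OF K]] .
  obtain g where g: "g \<in> carrier G" "y = \<phi> g x"
    using y unfolding orbit_def by auto
  then have "orbit (G\<lparr>carrier := K\<rparr>) \<phi> y = \<phi> g ` orbit (G\<lparr>carrier := K\<rparr>) \<phi> x"
    using normal_orbit_image[OF K g(1) x] by simp
  moreover have "inj_on (\<phi> g) (orbit (G\<lparr>carrier := K\<rparr>) \<phi> x)"
    using inj_prop[OF g(1)] K.orbit_subset[OF x] by (rule inj_on_subset)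
  ultimately show ?thesis
    by (simp add: card_image)
qed

lemma (in group_action) card_orbit_normal_dvd:
  assumes fin: "finite E" and K: "K \<lhd> G" and x: "x \<in> E"
  shows "card (orbit (G\<lparr>carrier := K\<rparr>) \<phi> x) dvd card (orbit G \<phi> x)"
proof -
  let ?orbK = "orbit (G\<lparr>carrier := K\<rparr>) \<phi>"
  interpret K: group_action "G\<lparr>carrier := K\<rparr>" E \<phi>
    using induced_action[OF normal_imp_subgroup[OF K]] .
  have KG: "K \<subseteq> carrier G"
    using normal_imp_subgroup[OF K] subgroup.subset by blast
  have finO: "finite (orbit G \<phi> x)"
    using finite_subset[OF orbit_subset[OF x] fin] .
  have sub: "?orbK y \<subseteq> orbit G \<phi> x" if y: "y \<in> orbit G \<phi> x" for y
  proof -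
    have "?orbK y \<subseteq> orbit G \<phi> y"
      using KG unfolding orbit_def by auto
    then show ?thesis
      using orbit_eq_if_mem[OF x y] by simp
  qed
  have "card (?orbK x) * card (?orbK ` orbit G \<phi> x) = card (\<Union> (?orbK ` orbit G \<phi> x))"
  proof (rule card_partition)
    show "finite (\<Union> (?orbK ` orbit G \<phi> x))"
      using sub finO by (meson UN_least finite_subset)
    show "c1 \<inter> c2 = {}"
      if "c1 \<in> ?orbK ` orbit G \<phi> x" "c2 \<in> ?orbK ` orbit G \<phi> x" "c1 \<noteq> c2" for c1 c2
    proof -
      have "c1 \<in> orbits (G\<lparr>carrier := K\<rparr>) E \<phi>" "c2 \<in> orbits (G\<lparr>carrier := K\<rparr>) E \<phi>"
        using that(1,2) orbit_subset[OF x] unfolding orbits_def by auto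
      then show ?thesis
        using K.disjoint_union that(3) by blast
    qed
  qed (use finO card_orbit_normal_eq[OF K x] in auto)
  also have "\<Union> (?orbK ` orbit G \<phi> x) = orbit G \<phi> x"
    using sub K.orbit_refl orbit_subset[OF x] by blast
  finally show ?thesis
    by (metis dvd_triv_left)
qed

lemma (in group_action) exists_fixed_point_if_order_prime:
  assumes p: "Factorial_Ring.prime p" and ord: "order G = p" and A: "finite A" "A \<subseteq> E"
    and closed: "\<And>g x. g \<in> carrier G \<Longrightarrow> x \<in> A \<Longrightarrow> \<phi> g x \<in> A"
    and ndvd: "\<not> p dvd card A"
  shows "\<exists>x\<in>A. \<forall>g\<in>carrier G. \<phi> g x = x"
proof (rule ccontr)
  assume none: "\<not> ?thesis"
  have orbit_sub: "orbit G \<phi> x \<subseteq> A" if "x \<in> A" for x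
    using that closed by (auto simp: orbit_def)
  have card_orbit: "card (orbit G \<phi> x) = p" if x: "x \<in> A" for x
  proof -
    have "card (orbit G \<phi> x) dvd p"
      using orbit_stabilizer_theorem x A(2) ord by (metis dvd_triv_left subsetD)
    then have "card (orbit G \<phi> x) = 1 \<or> card (orbit G \<phi> x) = p"
      using p by (simp add: prime_nat_iff)
    moreover have "card (orbit G \<phi> x) \<noteq> 1"
    proof
      assume "card (orbit G \<phi> x) = 1"
      then have "orbit G \<phi> x = {x}"
        using orbit_refl x A(2) by (metis card_1_singletonE singletonD subsetD)
      then show False
        using none x by (auto simp: orbit_def)
    qed
    ultimately show ?thesis
      by blast
  qed
  have "p * card (orbit G \<phi> ` A) = card (\<Union> (orbit G \<phi> ` A))"
  proof (rule card_partition)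
    show "finite (\<Union> (orbit G \<phi> ` A))"
      using orbit_sub A(1) by (meson UN_least finite_subset)
    show "c1 \<inter> c2 = {}" if "c1 \<in> orbit G \<phi> ` A" "c2 \<in> orbit G \<phi> ` A" "c1 \<noteq> c2" for c1 c2
      using that disjoint_union A(2) by (auto simp: orbits_def)
  qed (use A(1) card_orbit in auto)
  also have "\<Union> (orbit G \<phi> ` A) = A"
    using orbit_sub orbit_refl A(2) by blast
  finally show False
    using ndvd by (metis dvd_triv_left)
qed

section \<open>Conjugacy classes of finite simple groups\<close>

definition centralizer :: "('g, 'c) monoid_scheme \<Rightarrow> 'g set \<Rightarrow> 'g set" where
  "centralizer G S = {h \<in> carrier G. \<forall>s\<in>S. s \<otimes>\<^bsub>G\<^esub> h = h \<otimes>\<^bsub>G\<^esub> s}"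

lemma (in group) commute_inv:
  assumes "x \<in> carrier G" "y \<in> carrier G" "x \<otimes> y = y \<otimes> x"
  shows "x \<otimes> inv y = inv y \<otimes> x"
proof -
  have "x \<otimes> inv y = inv y \<otimes> (y \<otimes> x) \<otimes> inv y"
    using assms(1,2) by (simp add: m_assoc[symmetric])
  also have "\<dots> = inv y \<otimes> (x \<otimes> y) \<otimes> inv y"
    using assms by simp
  also have "\<dots> = inv y \<otimes> x"
    using assms(1,2) by (simp add: m_assoc)
  finally show ?thesis .
qed

lemma (in group) subgroup_centralizer:
  assumes "S \<subseteq> carrier G"
  shows "subgroup (centralizer G S) G"
proof (rule subgroupI)
  fix h assume "h \<in> centralizer G S"
  then show "inv h \<in> centralizer G S"
    using assms commute_inv by (auto simp: centralizer_def subset_iff)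
next
  fix h1 h2 assume "h1 \<in> centralizer G S" "h2 \<in> centralizer G S"
  then show "h1 \<otimes> h2 \<in> centralizer G S"
    using assms by (auto simp: centralizer_def subset_iff) (metis m_assoc)
next
  have "\<one> \<in> centralizer G S"
    using assms by (auto simp: centralizer_def)
  then show "centralizer G S \<noteq> {}"
    by blast
qed (auto simp: centralizer_def)

lemma (in group) card_centralizer_pos:
  assumes "finite (carrier G)" "S \<subseteq> carrier G"
  shows "card (centralizer G S) > 0"
proof -
  have C: "subgroup (centralizer G S) G"
    using subgroup_centralizer[OF assms(2)] .
  then have "finite (centralizer G S)"
    using finite_subset[OF subgroup.subset assms(1)] by blast
  then show ?thesis
    using subgroup.one_closed[OF C] card_gt_0_iff by blast
qed

lemma (in group) stabilizer_conjugation: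
  assumes "s \<in> carrier G"
  shows "stabilizer G (\<lambda>g. \<lambda>h\<in>carrier G. g \<otimes> h \<otimes> inv g) s = centralizer G {s}"
  using assms by (auto simp: stabilizer_def centralizer_def inv_solve_right' eq_commute[of "s \<otimes> _"])

lemma (in group) subset_centre_if_centralizer_eq_carrier:
  assumes "S \<subseteq> carrier G" and "centralizer G S = carrier G"
  shows "S \<subseteq> centralizer G (carrier G)"
proof
  fix q assume q: "q \<in> S"
  have "s \<otimes> q = q \<otimes> s" if "s \<in> carrier G" for s
  proof -
    have "s \<in> centralizer G S"
      using that assms(2) by simp
    then have "q \<otimes> s = s \<otimes> q"
      using q unfolding centralizer_def by simp
    then show ?thesis
      by (rule sym)
  qed
  then show "q \<in> centralizer G (carrier G)"
    using q assms(1) unfolding centralizer_def by blast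
qed

lemma (in simple_group) centre_trivial:
  assumes "\<not> comm_group G"
  shows "centralizer G (carrier G) = {\<one>}"
proof -
  have "centralizer G (carrier G) \<lhd> G"
  proof (rule normal_invI[OF subgroup_centralizer])
    fix x h assume "x \<in> carrier G" "h \<in> centralizer G (carrier G)"
    then show "x \<otimes> h \<otimes> inv x \<in> centralizer G (carrier G)"
      by (simp add: centralizer_def m_assoc)
  qed simp
  moreover have "centralizer G (carrier G) \<noteq> carrier G"
    using assms group_comm_groupI by (auto simp: centralizer_def)
  ultimately show ?thesis
    using no_real_normal_subgroup by blast
qed

lemma (in group) conjugate_eq_image: "g <# H #> inv g = (\<lambda>h. g \<otimes> h \<otimes> inv g) ` H"
  by (auto simp: l_coset_def r_coset_def)

lemma (in group) card_conjugate:
  assumes "g \<in> carrier G" "H \<subseteq> carrier G"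
  shows "card (g <# H #> inv g) = card H"
proof -
  have "inj_on (\<lambda>h. g \<otimes> h \<otimes> inv g) H"
    using conjugation_is_inj[OF assms(1)] assms(2) by (intro inj_onI) blast
  then show ?thesis
    unfolding conjugate_eq_image by (simp add: card_image)
qed

lemma (in group) one_mem_conjugate:
  assumes "g \<in> carrier G" "subgroup H G"
  shows "\<one> \<in> g <# H #> inv g"
proof -
  have "\<one> = g \<otimes> \<one> \<otimes> inv g"
    using assms(1) by simp
  then show ?thesis
    unfolding conjugate_eq_image using subgroup.one_closed[OF assms(2)] by blast
qed

lemma (in group) card_conjugates_mult_le:
  assumes fin: "finite (carrier G)" and H: "subgroup H G"
  shows "card ((\<lambda>g. g <# H #> inv g) ` carrier G) * card H \<le> order G"
proof -
  have Hc: "H \<subseteq> carrier G"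
    using H subgroup.subset by blast
  have orbit_eq: "orbit G (\<lambda>g. \<lambda>H \<in> {H. H \<subseteq> carrier G}. g <# H #> inv g) H
      = (\<lambda>g. g <# H #> inv g) ` carrier G"
    using Hc unfolding orbit_def by auto
  have "card ((\<lambda>g. g <# H #> inv g) ` carrier G) * card (normalizer G H) = order G"
    unfolding normalizer_def orbit_eq[symmetric]
    by (rule group_action.orbit_stabilizer_theorem[OF action_by_conjugation_on_power_set]) (use Hc in simp)
  moreover have "card H \<le> card (normalizer G H)"
  proof (rule card_mono)
    show "finite (normalizer G H)"
      using finite_subset[OF subgroup.subset[OF normalizer_imp_subgroup[OF Hc]] fin] .
    show "H \<subseteq> normalizer G H"
      using subgroup.subset[OF normal_imp_subgroup[OF subgroup_in_normalizer[OF H]]] by simp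
  qed
  ultimately show ?thesis
    by (metis mult_le_mono2)
qed

text \<open>Jordan: a proper subgroup has at most |G : H| conjugates, which all share \<open>\<one>\<close>, so they
  cannot cover G.\<close>

lemma (in group) subgroup_eq_carrier_if_conjugates_cover:
  assumes fin: "finite (carrier G)" and H: "subgroup H G"
    and cover: "carrier G \<subseteq> (\<Union>g\<in>carrier G. g <# H #> inv g)"
  shows "H = carrier G"
proof -
  have Hc: "H \<subseteq> carrier G"
    using H subgroup.subset by blast
  define C where "C = (\<lambda>g. g <# H #> inv g) ` carrier G"
  have card_conj: "card K = card H" and one_conj: "\<one> \<in> K" and KG: "K \<subseteq> carrier G"
    if K: "K \<in> C" for K
    using K card_conjugate[OF _ Hc] one_mem_conjugate[OF _ H] Hc
    by (auto simp: C_def conjugate_eq_image)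
  have finC: "finite C"
    using fin C_def by simp
  have finU: "finite (\<Union>K\<in>C. K - {\<one>})"
    using KG fin by (meson Diff_subset UN_least finite_subset subset_trans)
  have "carrier G \<subseteq> insert \<one> (\<Union>K\<in>C. K - {\<one>})"
    using cover unfolding C_def by blast
  then have "order G \<le> card (insert \<one> (\<Union>K\<in>C. K - {\<one>}))"
    unfolding order_def using finU by (intro card_mono) auto
  also have "\<dots> \<le> Suc (card (\<Union>K\<in>C. K - {\<one>}))"
    by (rule card_insert_le_m1) simp_all
  also have "card (\<Union>K\<in>C. K - {\<one>}) \<le> (\<Sum>K\<in>C. card (K - {\<one>}))"
    using finC by (rule card_UN_le)
  also have "(\<Sum>K\<in>C. card (K - {\<one>})) = card C * card H - card C"
    using card_conj one_conj by (simp add: card_Diff_singleton_if diff_mult_distrib2)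
  finally have lower: "order G \<le> Suc (card C * card H - card C)"
    by simp
  have "card H \<ge> 1"
    using fin Hc subgroup.one_closed[OF H] by (metis One_nat_def Suc_leI card_gt_0_iff empty_iff finite_subset)
  then have "card C \<le> card C * card H"
    by simp
  then have "card C \<le> 1"
    using card_conjugates_mult_le[OF fin H] lower unfolding C_def[symmetric] by linarith
  moreover have "H \<in> C"
  proof -
    have "H = \<one> <# H #> inv \<one>"
      using Hc by (simp add: lcos_mult_one)
    then show ?thesis
      unfolding C_def by (rule image_eqI) simp
  qed
  ultimately have "C = {H}"
    using card_le_Suc0_iff_eq[OF finC] by auto
  then show ?thesis
    using cover[folded C_def] Hc by auto
qed

lemma (in group) conjugate_into_centralizer:
  assumes fin: "finite (carrier G)" and p: "Factorial_Ring.prime p"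
    and P: "subgroup P G" "card P = p"
    and y: "y \<in> carrier G" and ndvd: "\<not> p dvd card (orbit G (\<lambda>g. \<lambda>h\<in>carrier G. g \<otimes> h \<otimes> inv g) y)"
  shows "\<exists>t\<in>carrier G. t \<otimes> y \<otimes> inv t \<in> centralizer G P"
proof -
  let ?conj = "\<lambda>g. \<lambda>h\<in>carrier G. g \<otimes> h \<otimes> inv g"
  interpret conj: group_action G "carrier G" ?conj
    by (rule action_by_conjugation)
  have Pc: "P \<subseteq> carrier G"
    using P(1) subgroup.subset by blast
  have closed: "?conj q x \<in> orbit G ?conj y" if "q \<in> P" "x \<in> orbit G ?conj y" for q x
  proof -
    have "?conj q x \<in> orbit G ?conj x"
      using that Pc unfolding orbit_def by blast
    then show ?thesis
      using conj.orbit_eq_if_mem[OF y that(2)] by simp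
  qed
  obtain c where c: "c \<in> orbit G ?conj y" and fixed: "\<forall>q\<in>P. ?conj q c = c"
    using group_action.exists_fixed_point_if_order_prime[OF conj.induced_action[OF P(1)] p _ _
        conj.orbit_subset[OF y]]
      closed ndvd P(2) finite_subset[OF conj.orbit_subset[OF y] fin]
    by (auto simp: order_def)
  then obtain t where t: "t \<in> carrier G" "c = t \<otimes> y \<otimes> inv t"
    using y unfolding orbit_def by auto
  then have cG: "c \<in> carrier G"
    using y by simp
  have "c \<in> centralizer G P"
    unfolding centralizer_def
  proof (intro CollectI conjI ballI cG)
    fix q assume q: "q \<in> P"
    then have "q \<otimes> c \<otimes> inv q = c"
      using fixed cG by auto
    then show "q \<otimes> c = c \<otimes> q"
      using q Pc cG by (metis inv_solve_right m_closed subsetD)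
  qed
  then show ?thesis
    using t by blast
qed

text \<open>Otherwise a subgroup P of order p fixes a point of every conjugacy class, so every element
  is conjugate into the centraliser of P; by Jordan's lemma P is then central.\<close>

theorem (in simple_group) exists_conjugacy_class_card_dvd:
  assumes nonabelian: "\<not> comm_group G" and fin: "finite (carrier G)"
    and p: "Factorial_Ring.prime p" and dvd: "p dvd order G"
  shows "\<exists>s\<in>carrier G. p dvd card (orbit G (\<lambda>g. \<lambda>h\<in>carrier G. g \<otimes> h \<otimes> inv g) s)"
proof (rule ccontr)
  assume none: "\<not> ?thesis"
  have "order G = p ^ 1 * (order G div p)"
    using dvd by simp
  then obtain P where P: "subgroup P G" "card P = p"
    using sylow_thm[OF p is_group _ fin] by (metis power_one_right)
  have Pc: "P \<subseteq> carrier G"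
    using P(1) subgroup.subset by blast
  have "carrier G \<subseteq> (\<Union>g\<in>carrier G. g <# centralizer G P #> inv g)"
  proof
    fix y assume y: "y \<in> carrier G"
    then obtain t where t: "t \<in> carrier G" "t \<otimes> y \<otimes> inv t \<in> centralizer G P"
      using conjugate_into_centralizer[OF fin p P y] none by blast
    moreover have "y = inv t \<otimes> (t \<otimes> y \<otimes> inv t) \<otimes> inv (inv t)"
      using t y by (simp add: m_assoc inv_solve_left)
    ultimately have "y \<in> inv t <# centralizer G P #> inv (inv t)"
      unfolding l_coset_def r_coset_def by blast
    then show "y \<in> (\<Union>g\<in>carrier G. g <# centralizer G P #> inv g)"
      using t(1) by blast
  qed
  then have "centralizer G P = carrier G"
    using subgroup_eq_carrier_if_conjugates_cover[OF fin subgroup_centralizer[OF Pc]] by blast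
  then have "card P \<le> card {\<one>}"
    using subset_centre_if_centralizer_eq_carrier[OF Pc] centre_trivial[OF nonabelian]
    by (intro card_mono) auto
  then show False
    using P(2) prime_gt_1_nat[OF p] by simp
qed

lemma carrier_PG [simp]: "carrier (PG \<Omega> G) = G"
  by (simp add: PG_def)

lemma PG_carrier_update [simp]: "(PG \<Omega> G)\<lparr>carrier := H\<rparr> = PG \<Omega> H"
  by (simp add: PG_def)

lemma perm_group_action:
  assumes "perm_group \<Omega> G"
  shows "group_action (PG \<Omega> G) \<Omega> (\<lambda>g. g)"
proof -
  have sub: "subgroup G (BijGroup \<Omega>)"
    using assms by (simp add: perm_group_def)
  have "group (PG \<Omega> G)"
    unfolding PG_def using group.subgroup_imp_group[OF group_BijGroup sub] .
  moreover have "(\<lambda>g. g) \<in> hom (PG \<Omega> G) (BijGroup \<Omega>)"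
    using subgroup.subset[OF sub] by (auto simp: hom_def PG_def)
  ultimately show ?thesis
    unfolding group_action_def group_hom_def group_hom_axioms_def using group_BijGroup by blast
qed

lemma perm_group_subgroup:
  assumes G: "perm_group \<Omega> G" and H: "subgroup H (PG \<Omega> G)"
  shows "perm_group \<Omega> H"
proof -
  have "group (PG \<Omega> G)"
    using group_action.group_hom[OF perm_group_action[OF G]] group_hom.axioms(1) by blast
  then have "group ((BijGroup \<Omega>)\<lparr>carrier := H\<rparr>)"
    using subgroup.subgroup_is_group[OF H] by (simp add: PG_def)
  moreover have "H \<subseteq> carrier (BijGroup \<Omega>)"
    using subgroup.subset[OF H] G subgroup.subset by (fastforce simp: perm_group_def)
  ultimately show ?thesis
    unfolding perm_group_def using group.group_incl_imp_subgroup[OF group_BijGroup] by blast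
qed

lemma finite_perm_group:
  assumes "finite \<Omega>" "perm_group \<Omega> G"
  shows "finite G"
proof -
  have "G \<subseteq> Bij \<Omega>"
    using assms(2) subgroup.subset by (fastforce simp: perm_group_def BijGroup_def)
  also have "Bij \<Omega> \<subseteq> (\<Pi>\<^sub>E x\<in>\<Omega>. \<Omega>)"
    using Bij_imp_funcset Bij_imp_extensional by (auto simp: PiE_def)
  finally show ?thesis
    by (rule finite_subset) (simp add: finite_PiE assms(1))
qed

lemma (in group) normal_socle: "socle G \<lhd> G"
  unfolding socle_def
proof (rule normal_generateI)
  show "\<Union> {N. minimal_normal G N} \<subseteq> carrier G"
    by (auto simp: minimal_normal_def dest: normal_imp_subgroup subgroup.mem_carrier)
  fix h g assume "h \<in> \<Union> {N. minimal_normal G N}" and g: "g \<in> carrier G"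
  then obtain M where M: "minimal_normal G M" "h \<in> M"
    by blast
  then have "g \<otimes> h \<otimes> inv g \<in> M"
    using normal.inv_op_closed2[OF _ g] by (auto simp: minimal_normal_def)
  then show "g \<otimes> h \<otimes> inv g \<in> \<Union> {N. minimal_normal G N}"
    using M by blast
qed

lemma perm_group_normal_socle:
  assumes "perm_group \<Omega> G"
  shows "socle (PG \<Omega> G) \<lhd> PG \<Omega> G"
  using group_action.group_hom[OF perm_group_action[OF assms]]
  by (rule group.normal_socle[OF group_hom.axioms(1)])

lemma normal_subgroup_orbit_is_block:
  assumes G: "perm_group \<Omega> G" and N: "N \<lhd> PG \<Omega> G" and \<alpha>: "\<alpha> \<in> \<Omega>"
  shows "is_block \<Omega> G (orbit (PG \<Omega> N) (\<lambda>g. g) \<alpha>)"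
  unfolding is_block_def
proof (intro conjI ballI)
  interpret G: group_action "PG \<Omega> G" \<Omega> "\<lambda>g. g"
    using perm_group_action[OF G] .
  interpret N: group_action "PG \<Omega> N" \<Omega> "\<lambda>g. g"
    using G.induced_action[OF normal_imp_subgroup[OF N]] by simp
  let ?Orb = "orbit (PG \<Omega> N) (\<lambda>g. g) \<alpha>"
  show "?Orb \<subseteq> \<Omega>"
    using N.orbit_subset[OF \<alpha>] .
  fix g assume g: "g \<in> G"
  show "g ` ?Orb = ?Orb \<or> g ` ?Orb \<inter> ?Orb = {}"
  proof (cases "g ` ?Orb \<inter> ?Orb = {}")
    case False
    then obtain z where z: "z \<in> g ` ?Orb" "z \<in> ?Orb"
      by blast
    have "g ` ?Orb = orbit (PG \<Omega> N) (\<lambda>g. g) (g \<alpha>)"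
      using G.normal_orbit_image[OF N _ \<alpha>] g by simp
    moreover have "g \<alpha> \<in> \<Omega>"
      using G.element_image g \<alpha> by simp
    ultimately have "orbit (PG \<Omega> N) (\<lambda>g. g) z = g ` ?Orb"
      using N.orbit_eq_if_mem z(1) by simp
    moreover have "orbit (PG \<Omega> N) (\<lambda>g. g) z = ?Orb"
      using N.orbit_eq_if_mem[OF \<alpha> z(2)] .
    ultimately show ?thesis
      by simp
  qed simp
qed

lemma primitive_normal_subgroup_transitive:
  assumes prim: "primitive \<Omega> G" and N: "N \<lhd> PG \<Omega> G" and \<alpha>: "\<alpha> \<in> \<Omega>"
    and moves: "n \<in> N" "n \<alpha> \<noteq> \<alpha>"
  shows "(\<lambda>n. n \<alpha>) ` N = \<Omega>"
proof -
  have G: "perm_group \<Omega> G"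
    using prim by (simp add: primitive_def)
  have Orb_eq: "orbit (PG \<Omega> N) (\<lambda>g. g) \<alpha> = (\<lambda>n. n \<alpha>) ` N"
    unfolding orbit_def by auto
  have "\<alpha> \<in> (\<lambda>n. n \<alpha>) ` N"
    using group_action.orbit_refl[OF perm_group_action[OF perm_group_subgroup[OF G
          normal_imp_subgroup[OF N]]] \<alpha>] Orb_eq by simp
  moreover have "(\<lambda>n. n \<alpha>) ` N \<noteq> {\<alpha>}"
    using moves by blast
  ultimately have "card ((\<lambda>n. n \<alpha>) ` N) \<noteq> 1"
    by (metis card_1_singletonE singletonD)
  then show ?thesis
    using prim normal_subgroup_orbit_is_block[OF G N \<alpha>] \<open>\<alpha> \<in> (\<lambda>n. n \<alpha>) ` N\<close> Orb_eq
    unfolding primitive_def by auto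
qed

lemma card_normal_stabilizer_orbit_dvd_subdegree:
  assumes fin: "finite \<Omega>" and G: "perm_group \<Omega> G" and N: "N \<lhd> PG \<Omega> G"
    and \<alpha>: "\<alpha> \<in> \<Omega>" and \<beta>: "\<beta> \<in> \<Omega>"
  shows "card {n \<beta> | n. n \<in> N \<and> n \<alpha> = \<alpha>} dvd subdegree G \<alpha> \<beta>"
proof -
  interpret G: group_action "PG \<Omega> G" \<Omega> "\<lambda>g. g"
    using perm_group_action[OF G] .
  define G\<alpha> where "G\<alpha> = stabilizer (PG \<Omega> G) (\<lambda>g. g) \<alpha>"
  have G\<alpha>_sub: "subgroup G\<alpha> (PG \<Omega> G)"
    unfolding G\<alpha>_def using G.stabilizer_subgroup[OF \<alpha>] .
  interpret G\<alpha>: group_action "PG \<Omega> G\<alpha>" \<Omega> "\<lambda>g. g"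
    using G.induced_action[OF G\<alpha>_sub] by simp
  have NG: "N \<subseteq> G"
    using subgroup.subset[OF normal_imp_subgroup[OF N]] by simp
  have G\<alpha>G: "G\<alpha> \<subseteq> G"
    unfolding G\<alpha>_def stabilizer_def by auto
  have "N \<inter> G\<alpha> \<lhd> (BijGroup \<Omega>)\<lparr>carrier := G \<inter> G\<alpha>\<rparr>"
    using group.normal_inter[OF group_BijGroup] G perm_group_subgroup[OF G G\<alpha>_sub] N
    unfolding perm_group_def PG_def by blast
  then have "N \<inter> G\<alpha> \<lhd> PG \<Omega> G\<alpha>"
    using G\<alpha>G by (simp add: PG_def Int_absorb1)
  then have "card (orbit (PG \<Omega> (N \<inter> G\<alpha>)) (\<lambda>g. g) \<beta>) dvd card (orbit (PG \<Omega> G\<alpha>) (\<lambda>g. g) \<beta>)"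
    using G\<alpha>.card_orbit_normal_dvd[OF fin _ \<beta>] by simp
  moreover have "orbit (PG \<Omega> (N \<inter> G\<alpha>)) (\<lambda>g. g) \<beta> = {n \<beta> | n. n \<in> N \<and> n \<alpha> = \<alpha>}"
    using NG unfolding orbit_def G\<alpha>_def stabilizer_def by auto
  moreover have "orbit (PG \<Omega> G\<alpha>) (\<lambda>g. g) \<beta> = {g \<beta> | g. g \<in> G \<and> g \<alpha> = \<alpha>}"
    unfolding orbit_def G\<alpha>_def stabilizer_def by auto
  ultimately show ?thesis
    unfolding subdegree_def by simp
qed

lemma perm_group_iso_action:
  assumes N: "perm_group \<Omega> N" and f: "f \<in> iso (PG \<Omega> N) Q" and Q: "group Q"
  shows "group_action Q \<Omega> (inv_into N f)"
proof -
  interpret N: group_action "PG \<Omega> N" \<Omega> "\<lambda>g. g"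
    using perm_group_action[OF N] .
  have "inv_into N f \<in> hom Q (PG \<Omega> N)"
    using group.iso_set_sym[OF N.group_hom[THEN group_hom.axioms(1)] f] iso_imp_homomorphism
    by fastforce
  then show ?thesis
    using N.action_via_hom[OF Q] by simp
qed

lemma stabilizer_inv_into_iso:
  assumes f: "f \<in> iso (PG \<Omega> N) Q"
  shows "stabilizer Q (inv_into N f) \<alpha> = f ` {n \<in> N. n \<alpha> = \<alpha>}"
proof -
  have bij: "bij_betw f N (carrier Q)"
    using f by (simp add: iso_def)
  then have "inv_into N f q \<in> N" "f (inv_into N f q) = q" if "q \<in> carrier Q" for q
    using that by (auto simp: bij_betw_def inv_into_into f_inv_into_f)
  moreover have "inv_into N f (f n) = n" "f n \<in> carrier Q" if "n \<in> N" for n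
    using that bij by (auto simp: bij_betw_def)
  ultimately show ?thesis
    unfolding stabilizer_def by (auto intro!: image_eqI)
qed

section \<open>Diagonal subgroups of a direct power\<close>

definition diag :: "nat \<Rightarrow> (nat \<Rightarrow> 'a \<Rightarrow> 'b) \<Rightarrow> 'a \<Rightarrow> nat \<Rightarrow> 'b" where
  "diag k \<phi> t = (\<lambda>i\<in>{..<k}. \<phi> i t)"

locale diagonal_product = group T for T (structure) +
  fixes k :: nat and \<phi> :: "nat \<Rightarrow> 'a \<Rightarrow> 'a"
  assumes two_le_k: "2 \<le> k" and aut: "i < k \<Longrightarrow> \<phi> i \<in> iso T T"
begin

abbreviation P where "P \<equiv> product_group {..<k} (\<lambda>_. T)"

abbreviation Diag where "Diag \<equiv> diag k \<phi> ` carrier T"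

definition twist :: "'a \<Rightarrow> nat \<Rightarrow> 'a" where
  "twist s = (\<lambda>i\<in>{..<k}. if i = 0 then \<phi> 0 s else \<one>)"

lemma aut_hom: "i < k \<Longrightarrow> group_hom T T (\<phi> i)"
  using aut is_group by (auto simp: group_hom_def group_hom_axioms_def iso_def)

lemma aut_closed: "i < k \<Longrightarrow> t \<in> carrier T \<Longrightarrow> \<phi> i t \<in> carrier T"
  by (rule group_hom.hom_closed[OF aut_hom])

lemma aut_inj: "i < k \<Longrightarrow> inj_on (\<phi> i) (carrier T)"
  using aut by (auto simp: iso_def bij_betw_def)

lemma diag_closed: "t \<in> carrier T \<Longrightarrow> diag k \<phi> t \<in> carrier P"
  by (simp add: diag_def aut_closed)

lemma twist_closed: "s \<in> carrier T \<Longrightarrow> twist s \<in> carrier P"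
  using two_le_k by (simp add: twist_def aut_closed)

lemma inj_on_diag: "inj_on (diag k \<phi>) (carrier T)"
proof (rule inj_onI)
  fix t t' assume t: "t \<in> carrier T" "t' \<in> carrier T" and eq: "diag k \<phi> t = diag k \<phi> t'"
  have "\<phi> 0 t = \<phi> 0 t'"
    using fun_cong[OF eq, of 0] two_le_k by (simp add: diag_def)
  then show "t = t'"
    using aut_inj[of 0] two_le_k t by (auto dest: inj_onD)
qed

lemma finite_carrier_if_finite_power:
  assumes "finite (carrier P)"
  shows "finite (carrier T)"
proof -
  have "0 \<in> {..<k}"
    using two_le_k by simp
  then show ?thesis
    using assms finite_product_group[of "{..<k}" "\<lambda>_. T"] is_group by blast
qed

lemma card_Diag: "card Diag = card (carrier T)"
  using inj_on_diag by (rule card_image)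

lemma Diag_ne_carrier:
  assumes "carrier T \<noteq> {\<one>}"
  shows "Diag \<noteq> carrier P"
proof
  assume Diag_eq: "Diag = carrier P"
  obtain t where t: "t \<in> carrier T" "t \<noteq> \<one>"
    using assms one_closed by blast
  define e where "e = (\<lambda>i\<in>{..<k}. if i = 1 then t else \<one>)"
  have "e \<in> carrier P"
    using t by (simp add: e_def)
  then have "e \<in> Diag"
    unfolding Diag_eq .
  then obtain w where w: "w \<in> carrier T" "e = diag k \<phi> w"
    by blast
  have "\<phi> 0 w = \<phi> 0 \<one>"
    using fun_cong[OF w(2), of 0] two_le_k group_hom.hom_one[OF aut_hom, of 0]
    by (simp add: e_def diag_def)
  then have "w = \<one>"
    using aut_inj[of 0] two_le_k w(1) by (auto dest: inj_onD)
  moreover have "t = \<phi> 1 w"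
    using fun_cong[OF w(2), of 1] two_le_k by (simp add: e_def diag_def)
  ultimately show False
    using t(2) group_hom.hom_one[OF aut_hom, of 1] two_le_k by simp
qed

lemma conj_twist_diag:
  assumes s: "s \<in> carrier T" and t: "t \<in> carrier T"
  shows "inv\<^bsub>P\<^esub> (twist s) \<otimes>\<^bsub>P\<^esub> diag k \<phi> t \<otimes>\<^bsub>P\<^esub> twist s
    = (\<lambda>i\<in>{..<k}. if i = 0 then \<phi> 0 (inv s \<otimes> t \<otimes> s) else \<phi> i t)"
proof -
  have "inv\<^bsub>P\<^esub> (twist s) = (\<lambda>i\<in>{..<k}. inv (twist s i))"
    using twist_closed[OF s] is_group by simp
  moreover have "inv (\<phi> 0 s) \<otimes> \<phi> 0 t \<otimes> \<phi> 0 s = \<phi> 0 (inv s \<otimes> t \<otimes> s)"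
    using group_hom.hom_mult[OF aut_hom] group_hom.hom_inv[OF aut_hom] two_le_k s t by simp
  ultimately show ?thesis
    using two_le_k s t by (auto simp: twist_def diag_def aut_closed)
qed

lemma conj_twist_diag_mem_iff:
  assumes s: "s \<in> carrier T" and t: "t \<in> carrier T"
  shows "inv\<^bsub>P\<^esub> (twist s) \<otimes>\<^bsub>P\<^esub> diag k \<phi> t \<otimes>\<^bsub>P\<^esub> twist s \<in> Diag \<longleftrightarrow> t \<in> centralizer T {s}"
proof
  assume "inv\<^bsub>P\<^esub> (twist s) \<otimes>\<^bsub>P\<^esub> diag k \<phi> t \<otimes>\<^bsub>P\<^esub> twist s \<in> Diag"
  then obtain w where w: "w \<in> carrier T"
    and eq: "(\<lambda>i\<in>{..<k}. if i = 0 then \<phi> 0 (inv s \<otimes> t \<otimes> s) else \<phi> i t) = diag k \<phi> w"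
    using conj_twist_diag[OF s t] by auto
  have "\<phi> 1 t = \<phi> 1 w"
    using fun_cong[OF eq, of 1] two_le_k by (simp add: diag_def)
  then have "t = w"
    using aut_inj[of 1] two_le_k t w by (auto dest: inj_onD)
  moreover have "\<phi> 0 (inv s \<otimes> t \<otimes> s) = \<phi> 0 w"
    using fun_cong[OF eq, of 0] two_le_k by (simp add: diag_def)
  ultimately have "inv s \<otimes> t \<otimes> s = t"
    using aut_inj[of 0] two_le_k s t by (auto dest: inj_onD)
  then have "s \<otimes> t = t \<otimes> s"
    using s t by (metis inv_solve_left' m_assoc m_closed inv_closed)
  then show "t \<in> centralizer T {s}"
    using t by (simp add: centralizer_def)
next
  assume "t \<in> centralizer T {s}"
  then have "inv s \<otimes> t \<otimes> s = t"
    using s t by (simp add: centralizer_def m_assoc inv_solve_left')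
  then have "inv\<^bsub>P\<^esub> (twist s) \<otimes>\<^bsub>P\<^esub> diag k \<phi> t \<otimes>\<^bsub>P\<^esub> twist s = diag k \<phi> t"
    using conj_twist_diag[OF s t] by (auto simp: diag_def)
  then show "inv\<^bsub>P\<^esub> (twist s) \<otimes>\<^bsub>P\<^esub> diag k \<phi> t \<otimes>\<^bsub>P\<^esub> twist s \<in> Diag"
    using t by simp
qed

end

locale diagonal_action = diagonal_product +
  fixes E and \<psi> :: "(nat \<Rightarrow> 'a) \<Rightarrow> 'e \<Rightarrow> 'e" and \<alpha> :: 'e
  assumes action: "group_action (product_group {..<k} (\<lambda>_. T)) E \<psi>"
    and \<alpha>: "\<alpha> \<in> E"
    and stabilizer_\<alpha>: "stabilizer (product_group {..<k} (\<lambda>_. T)) \<psi> \<alpha> = diag k \<phi> ` carrier T"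
begin

sublocale P: group_action P E \<psi>
  by (rule action)

lemma card_eq_power_if_transitive:
  assumes "finite (carrier T)" and transitive: "orbit P \<psi> \<alpha> = E"
  shows "card E = card (carrier T) ^ (k - 1)"
proof -
  have "card E * card (carrier T) = card (carrier T) ^ k"
    using P.orbit_stabilizer_theorem[OF \<alpha>] transitive stabilizer_\<alpha> card_Diag
    by (simp add: order_def card_PiE)
  moreover have "k = Suc (k - 1)"
    using two_le_k by simp
  moreover have "card (carrier T) > 0"
    using assms(1) one_closed card_gt_0_iff by blast
  ultimately show ?thesis
    by (metis mult.commute mult_right_cancel neq0_conv power_Suc)
qed

lemma transitive_if_normal_in_primitive:
  assumes prim: "primitive E G" and N: "N \<lhd> PG E G" and image: "\<psi> ` carrier P = N"
    and nontrivial: "carrier T \<noteq> {\<one>}"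
  shows "orbit P \<psi> \<alpha> = E"
proof -
  obtain q where q: "q \<in> carrier P" "q \<notin> Diag"
    using Diag_ne_carrier[OF nontrivial] diag_closed by blast
  then have "\<psi> q \<in> N" "\<psi> q \<alpha> \<noteq> \<alpha>"
    using image stabilizer_\<alpha> unfolding stabilizer_def by auto
  then have "(\<lambda>n. n \<alpha>) ` N = E"
    using primitive_normal_subgroup_transitive[OF prim N \<alpha>] by blast
  moreover have "orbit P \<psi> \<alpha> = (\<lambda>n. n \<alpha>) ` \<psi> ` carrier P"
    unfolding orbit_def by auto
  ultimately show ?thesis
    using image by simp
qed

text \<open>The stabiliser of \<open>\<psi> (twist s) \<alpha>\<close> in the diagonal D is D \<inter> D^(twist s),
  which \<open>diag\<close> identifies with the centraliser of s.\<close>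

lemma stabilizer_twist:
  assumes s: "s \<in> carrier T"
  shows "stabilizer (P\<lparr>carrier := Diag\<rparr>) \<psi> (\<psi> (twist s) \<alpha>) = diag k \<phi> ` centralizer T {s}"
proof -
  have y: "twist s \<in> carrier P"
    using twist_closed[OF s] .
  have mem: "diag k \<phi> t \<in> stabilizer P \<psi> (\<psi> (twist s) \<alpha>) \<longleftrightarrow> t \<in> centralizer T {s}"
    if t: "t \<in> carrier T" for t
  proof -
    have "diag k \<phi> t \<in> stabilizer P \<psi> (\<psi> (twist s) \<alpha>)
        \<longleftrightarrow> inv\<^bsub>P\<^esub> (twist s) \<otimes>\<^bsub>P\<^esub> diag k \<phi> t \<otimes>\<^bsub>P\<^esub> twist s \<in> Diag"
      using P.stabilizer_image_iff[OF \<alpha> y] diag_closed[OF t] unfolding stabilizer_\<alpha> by blast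
    also have "\<dots> \<longleftrightarrow> t \<in> centralizer T {s}"
      by (rule conj_twist_diag_mem_iff[OF s t])
    finally show ?thesis .
  qed
  have "stabilizer (P\<lparr>carrier := Diag\<rparr>) \<psi> (\<psi> (twist s) \<alpha>) = Diag \<inter> stabilizer P \<psi> (\<psi> (twist s) \<alpha>)"
    using diag_closed by (auto simp: stabilizer_def)
  also have "\<dots> = diag k \<phi> ` centralizer T {s}"
    using mem by (auto simp: centralizer_def)
  finally show ?thesis .
qed

lemma card_orbit_twist:
  assumes fin: "finite (carrier T)" and s: "s \<in> carrier T"
  shows "card (orbit (P\<lparr>carrier := Diag\<rparr>) \<psi> (\<psi> (twist s) \<alpha>))
    = card (orbit T (\<lambda>g. \<lambda>h\<in>carrier T. g \<otimes> h \<otimes> inv g) s)"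
proof -
  let ?\<beta> = "\<psi> (twist s) \<alpha>" and ?PD = "P\<lparr>carrier := Diag\<rparr>"
  interpret D: group_action ?PD E \<psi>
    using P.induced_action P.stabilizer_subgroup[OF \<alpha>] stabilizer_\<alpha> by simp
  have \<beta>: "?\<beta> \<in> E"
    using P.element_image[OF twist_closed[OF s] \<alpha>] by simp
  have "card (stabilizer ?PD \<psi> ?\<beta>) = card (centralizer T {s})"
    unfolding stabilizer_twist[OF s]
    using inj_on_subset[OF inj_on_diag] by (simp add: card_image centralizer_def)
  then have orbit_eq: "card (orbit ?PD \<psi> ?\<beta>) * card (centralizer T {s}) = card (carrier T)"
    using D.orbit_stabilizer_theorem[OF \<beta>] card_Diag by (simp add: order_def)
  have class_eq: "card (orbit T (\<lambda>g. \<lambda>h\<in>carrier T. g \<otimes> h \<otimes> inv g) s) * card (centralizer T {s})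
      = card (carrier T)"
    using group_action.orbit_stabilizer_theorem[OF action_by_conjugation s] stabilizer_conjugation[OF s]
    by (simp add: order_def)
  have cancel: "a = b" if "a * c = n" "b * c = n" "0 < c" for a b c n :: nat
    using that by (metis mult_cancel2 neq0_conv)
  show ?thesis
    using cancel[OF orbit_eq class_eq card_centralizer_pos[OF fin]] s by simp
qed

end

lemma diagonal_action_inv_into_iso:
  assumes N: "perm_group \<Omega> N" and T: "group T" and k: "2 \<le> k" and aut: "\<forall>i<k. \<phi> i \<in> iso T T"
    and f: "f \<in> iso (PG \<Omega> N) (product_group {..<k} (\<lambda>_. T))" and \<alpha>: "\<alpha> \<in> \<Omega>"
    and stabilizer: "f ` {n \<in> N. n \<alpha> = \<alpha>} = diag k \<phi> ` carrier T"
  shows "diagonal_action T k \<phi> \<Omega> (inv_into N f) \<alpha>"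
proof (intro diagonal_action.intro diagonal_product.intro diagonal_product_axioms.intro
    diagonal_action_axioms.intro)
  show "stabilizer (product_group {..<k} (\<lambda>_. T)) (inv_into N f) \<alpha> = diag k \<phi> ` carrier T"
    using stabilizer_inv_into_iso[OF f] stabilizer by simp
  show "group_action (product_group {..<k} (\<lambda>_. T)) \<Omega> (inv_into N f)"
    using perm_group_iso_action[OF N f] T by simp
qed (use T k aut \<alpha> in auto)

lemma diagonal_type_socle_action:
  assumes fin: "finite \<Omega>" and prim: "primitive \<Omega> G" and dt: "diagonal_type \<Omega> G T k"
  obtains \<phi> \<psi> \<alpha> where "diagonal_action T k \<phi> \<Omega> \<psi> \<alpha>" and "finite (carrier T)"
    and "orbit (product_group {..<k} (\<lambda>_. T)) \<psi> \<alpha> = \<Omega>"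
    and "\<And>\<beta>. orbit ((product_group {..<k} (\<lambda>_. T))\<lparr>carrier := diag k \<phi> ` carrier T\<rparr>) \<psi> \<beta>
      = {n \<beta> | n. n \<in> socle (PG \<Omega> G) \<and> n \<alpha> = \<alpha>}"
proof -
  let ?N = "socle (PG \<Omega> G)" and ?P = "product_group {..<k} (\<lambda>_. T)"
  have G: "perm_group \<Omega> G"
    using prim by (simp add: primitive_def)
  have normal: "?N \<lhd> PG \<Omega> G"
    using perm_group_normal_socle[OF G] .
  have N: "perm_group \<Omega> ?N"
    using perm_group_subgroup[OF G normal_imp_subgroup[OF normal]] .
  obtain f \<alpha> \<phi> where T: "simple_group T" and k: "2 \<le> k"
    and f: "f \<in> iso (PG \<Omega> ?N) ?P" and \<alpha>: "\<alpha> \<in> \<Omega>" and aut: "\<forall>i<k. \<phi> i \<in> iso T T"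
    and fD: "f ` {n \<in> ?N. n \<alpha> = \<alpha>} = diag k \<phi> ` carrier T"
    using dt unfolding diagonal_type_def diag_def by (auto simp: Setcompr_eq_image)
  interpret T: simple_group T
    by (rule T)
  let ?\<psi> = "inv_into ?N f"
  have "diagonal_action T k \<phi> \<Omega> ?\<psi> \<alpha>"
    using diagonal_action_inv_into_iso[OF N T.is_group k aut f \<alpha> fD] .
  then interpret D: diagonal_action T k \<phi> \<Omega> ?\<psi> \<alpha> .
  have bij: "bij_betw f ?N (carrier ?P)"
    using f by (simp add: iso_def)
  then have "finite (carrier T)"
    using D.finite_carrier_if_finite_power finite_perm_group[OF fin N] bij_betw_finite by blast
  moreover have "?\<psi> ` carrier ?P = ?N"
    using bij bij_betw_inv_into bij_betw_imp_surj_on by blast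
  then have "orbit ?P ?\<psi> \<alpha> = \<Omega>"
    using D.transitive_if_normal_in_primitive[OF prim normal] T.simple_not_triv by blast
  moreover have "orbit (?P\<lparr>carrier := D.Diag\<rparr>) ?\<psi> \<beta> = {n \<beta> | n. n \<in> ?N \<and> n \<alpha> = \<alpha>}" for \<beta>
  proof -
    have Diag_image: "?\<psi> ` D.Diag = {n \<in> ?N. n \<alpha> = \<alpha>}"
      using fD[symmetric] inv_into_image_cancel[of f ?N] bij by (simp add: bij_betw_def)
    have "orbit (?P\<lparr>carrier := D.Diag\<rparr>) ?\<psi> \<beta> = (\<lambda>n. n \<beta>) ` ?\<psi> ` D.Diag"
      unfolding orbit_def by auto
    then show ?thesis
      unfolding Diag_image by blast
  qed
  ultimately show thesis
    using that D.diagonal_action_axioms by blast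
qed

theorem lemma3p3:
  fixes \<Omega> :: "'a set" and G :: "('a \<Rightarrow> 'a) set" and T :: "('b, 'c) monoid_scheme"
    and k :: nat and p :: nat
  assumes "finite \<Omega>"
    and "primitive \<Omega> G"
    and "diagonal_type \<Omega> G T k"
    and "Factorial_Ring.prime p" and "p dvd card \<Omega>"
  shows "\<exists>\<alpha>\<in>\<Omega>. \<exists>\<beta>\<in>\<Omega>. p dvd subdegree G \<alpha> \<beta>"
proof -
  obtain \<phi> \<psi> \<alpha> where "diagonal_action T k \<phi> \<Omega> \<psi> \<alpha>" and finT: "finite (carrier T)"
    and transitive: "orbit (product_group {..<k} (\<lambda>_. T)) \<psi> \<alpha> = \<Omega>"
    and stabilizer_orbit: "\<And>\<beta>. orbit ((product_group {..<k} (\<lambda>_. T))\<lparr>carrier := diag k \<phi> ` carrier T\<rparr>)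
      \<psi> \<beta> = {n \<beta> | n. n \<in> socle (PG \<Omega> G) \<and> n \<alpha> = \<alpha>}"
    using diagonal_type_socle_action[OF assms(1-3)] by blast
  interpret D: diagonal_action T k \<phi> \<Omega> \<psi> \<alpha>
    by fact
  have "p dvd card (carrier T) ^ (k - 1)"
    using D.card_eq_power_if_transitive[OF finT transitive] assms(5) by simp
  then have "p dvd order T"
    using prime_dvd_power[OF assms(4)] by (simp add: order_def)
  moreover have "simple_group T" "\<not> comm_group T"
    using assms(3) by (simp_all add: diagonal_type_def)
  ultimately obtain s where s: "s \<in> carrier T"
    and p_dvd: "p dvd card (orbit T (\<lambda>g. \<lambda>h\<in>carrier T. g \<otimes>\<^bsub>T\<^esub> h \<otimes>\<^bsub>T\<^esub> inv\<^bsub>T\<^esub> g) s)"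
    using simple_group.exists_conjugacy_class_card_dvd[OF _ _ finT assms(4)] by blast
  define \<beta> where "\<beta> = \<psi> (D.twist s) \<alpha>"
  have \<beta>: "\<beta> \<in> \<Omega>"
    unfolding \<beta>_def using D.P.element_image[OF D.twist_closed[OF s] D.\<alpha>] by simp
  have "p dvd card {n \<beta> | n. n \<in> socle (PG \<Omega> G) \<and> n \<alpha> = \<alpha>}"
    using D.card_orbit_twist[OF finT s] p_dvd stabilizer_orbit unfolding \<beta>_def by simp
  moreover have "perm_group \<Omega> G"
    using assms(2) by (simp add: primitive_def)
  then have "card {n \<beta> | n. n \<in> socle (PG \<Omega> G) \<and> n \<alpha> = \<alpha>} dvd subdegree G \<alpha> \<beta>"
    using card_normal_stabilizer_orbit_dvd_subdegree[OF assms(1) _ perm_group_normal_socle D.\<alpha> \<beta>]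
    by blast
  ultimately have "p dvd subdegree G \<alpha> \<beta>"
    by (rule dvd_trans)
  then show ?thesis
    using D.\<alpha> \<beta> by blast
qed

end
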